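(* Let $\lambda x.\vec{t}$ be a closed $\lambda$-abstraction. Then $\lambda x.\vec{t}\in[\![\sharp\mathbb{B}\rightarrow\sharp\mathbb{B}]\!]$ if and only if $\lambda x.\vec{t}$ represents a unitary operator $F:\mathbb{C}^2\to\mathbb{C}^2$ (i.e. a linear map with $\langle F(u)|F(v)\rangle=\langle u|v\rangle$ for all $u,v\in\mathbb{C}^2$).
   Context: Calculus. Fix a countably infinite set of variables. Pure values: $v,w::=x\mid\lambda x.\vec{s}\mid *\mid (v_1,v_2)\mid \mathtt{inl}(v)\mid\mathtt{inr}(v)$. Pure terms: $s,t::=v\mid s\,t\mid t;\vec{s}\mid \mathtt{let}\,(x_1,x_2)=t\,\mathtt{in}\,\vec{s}\mid \mathtt{match}\,t\,\{\mathtt{inl}\,x_1\mapsto\vec{s}_1\mid\mathtt{inr}\,x_2\mapsto\vec{s}_2\}$. Term distributions: $\vec{t}::=\vec{0}\mid t\mid \vec{s}+\vec{t}\mid\alpha\cdot\vec{t}$ ($\alpha\in\mathbb{C}$); value distributions are those built only from pure values. Terms are considered up to $\alpha$-conversion. Top-level distributions are considered modulo the congruence $\equiv$ generated by $\vec t+\vec 0\equiv\vec t$, $1\cdot\vec t\equiv\vec t$, $\alpha\cdot(\beta\cdot\vec t)\equiv\alpha\beta\cdot\vec t$, commutativity and associativity of $+$, $(\alpha+\beta)\cdot\vec t\equiv\alpha\cdot\vec t+\beta\cdot\vec t$, $\alpha\cdot(\vec t_1+\vec t_2)\equiv\alpha\cdot\vec t_1+\alpha\cdot\vec t_2$; this congruence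 only goes through $+$ and $\cdot$ and never inside pure terms (bodies of abstractions, sequences, lets, match branches are raw distributions up to $\alpha$-conversion only). In particular $0\cdot t\not\equiv\vec 0$; every distribution has a unique canonical form $\sum_i\alpha_i\cdot t_i$ with pairwise distinct pure terms $t_i$ (coefficients possibly $0$), whose set $\{t_i\}$ is its domain. Constructs are extended by linearity: for $\vec v=\sum_i\alpha_i v_i$, $\vec w=\sum_j\beta_j w_j$, $\vec t=\sum_k\gamma_k t_k$, $\vec s=\sum_l\delta_l s_l$: $(\vec v,\vec w)=\sum_{i,j}\alpha_i\beta_j(v_i,w_j)$, $\mathtt{inl}(\vec v)=\sum_i\alpha_i\mathtt{inl}(v_i)$ (similarly $\mathtt{inr}$), $\vec t\,\vec s=\sum_{k,l}\gamma_k\delta_l\, t_k s_l$, and $\vec t;\vec s$, $\mathtt{let}$, $\mathtt{match}$ are linear in their first argument. $\mathtt{tt}:=\mathtt{inl}( * )$, $\mathtt{ff}:=\mathtt{inr}( * )$. $\vec t[x:=w]$ is substitution of a pure value (linear in $\vec t$); bilinear substitution is $\vec t\langle x:=\vec w\rangle:=\sum_j\beta_j\cdot\vec t[x:=w_j]$ for $\vec w=\sum_j\beta_j w_j$ canonical. Evaluation. Atomic evaluation $t\triangleright\vec t'$: $(\lambda x.\vec t)\,v\triangleright\vec t[x:=v]$; $*;\vec s\triangleright\vec s$; $\mathtt{let}\,(x,y)=(v,w)\,\mathtt{in}\,\vec s\triangleright\vec s[x:=v,y:=w]$; $\mathtt{match}\,\mathtt{inl}(v)\{\ldots\}\triangleright\vec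 s_1[x_1:=v]$; $\mathtt{match}\,\mathtt{inr}(v)\{\ldots\}\triangleright\vec s_2[x_2:=v]$; and if $t\triangleright\vec t'$ then $s\,t\triangleright s\,\vec t'$, $t\,v\triangleright\vec t'\,v$, $t;\vec s\triangleright\vec t';\vec s$, $\mathtt{let}\,(x,y)=t\,\mathtt{in}\,\vec s\triangleright\mathtt{let}\,(x,y)=\vec t'\,\mathtt{in}\,\vec s$, $\mathtt{match}\,t\{\ldots\}\triangleright\mathtt{match}\,\vec t'\{\ldots\}$ (here $v,w$ pure values). One-step evaluation: $\vec t\succ\vec t'$ iff $\vec t\equiv\alpha\cdot s+\vec r$ and $\vec t'\equiv\alpha\cdot\vec s'+\vec r$ with $s\triangleright\vec s'$. Evaluation $\vec t\succ^*\vec t'$ is the reflexive-transitive closure. Semantics. $\vec{\mathcal V}$ is the set of closed value distributions. For $\vec v=\sum_i\alpha_i v_i$, $\vec w=\sum_j\beta_jw_j$ in canonical form, $\langle\vec v|\vec w\rangle=\sum_{i,j}\overline{\alpha_i}\beta_j\delta_{v_i,w_j}$, $\|\vec v\|=\sqrt{\langle\vec v|\vec v\rangle}$, $\mathcal S=\{\vec v:\|\vec v\|=1\}$; $\mathrm{Span}(X)$ is the set of finite linear combinations of elements of $X$. Types include $\mathbb U$, $A+B$, $\sharp A$, $A\rightarrow B$ with $[\![\mathbb U]\!]=\{*\}$, $[\![A+B]\!]=\{\mathtt{inl}(\vec v):\vec v\in[\![A]\!]\}\cup\{\mathtt{inr}(\vec w):\vec w\in[\![B]\!]\}$, $[\![\sharp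 A]\!]=\mathrm{Span}([\![A]\!])\cap\mathcal S$, $[\![A\rightarrow B]\!]=\{\lambda x.\vec t\ \text{closed}:\forall\vec v\in[\![A]\!],\ \vec t\langle x:=\vec v\rangle\Vdash B\}$, where $\vec t\Vdash A$ means $\vec t\succ^*\vec v$ for some $\vec v\in[\![A]\!]$. $\mathbb B:=\mathbb U+\mathbb U$. The Boolean projection $\pi_{\mathbb B}:\mathrm{Span}(\{\mathtt{tt},\mathtt{ff}\})\to\mathbb C^2$ sends $\alpha\cdot\mathtt{tt}\mapsto(\alpha,0)$, $\beta\cdot\mathtt{ff}\mapsto(0,\beta)$, $\alpha\cdot\mathtt{tt}+\beta\cdot\mathtt{ff}\mapsto(\alpha,\beta)$. A closed term distribution $\vec t$ represents $F:\mathbb C^2\to\mathbb C^2$ if for every $\vec v\in\mathrm{Span}(\{\mathtt{tt},\mathtt{ff}\})$ there is $\vec w\in\mathrm{Span}(\{\mathtt{tt},\mathtt{ff}\})$ with $\vec t\,\vec v\succ^*\vec w$ and $\pi_{\mathbb B}(\vec w)=F(\pi_{\mathbb B}(\vec v))$. *)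

theory Defs
  imports Complex_Main
begin

section \<open>Syntax (de Bruijn indices; alpha-conversion is syntactic equality)\<close>

text \<open>An abstraction Lam d binds index 0 in d.
  Let t d binds two variables in d: index 1 is x1 and index 0 is x2.
  Match t d1 d2 binds index 0 in each branch.
  Raw distributions (inside pure terms) are the syntax trees of the grammar,
  with no identification other than alpha-conversion.\<close>

datatype val =
    Var nat
  | Lam dist
  | Star
  | Pair val val
  | Inl val
  | Inr val
and trm =
    Val val
  | App trm trm
  | Seq trm dist
  | Let trm dist
  | Match trm dist dist
and dist =
    DZero
  | DTm trm
  | DPlus dist dist
  | DScale complex dist

section \<open>Congruence on top-level distributions\<close>

inductive deq :: "dist \<Rightarrow> dist \<Rightarrow> bool" where
  deq_refl: "deq a a"
| deq_sym: "deq a b \<Longrightarrow> deq b a"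
| deq_trans: "deq a b \<Longrightarrow> deq b c \<Longrightarrow> deq a c"
| deq_plus_cong: "deq a a' \<Longrightarrow> deq b b' \<Longrightarrow> deq (DPlus a b) (DPlus a' b')"
| deq_scale_cong: "deq a a' \<Longrightarrow> deq (DScale c a) (DScale c a')"
| deq_zero: "deq (DPlus a DZero) a"
| deq_one: "deq (DScale 1 a) a"
| deq_scale_scale: "deq (DScale \<alpha> (DScale \<beta> a)) (DScale (\<alpha> * \<beta>) a)"
| deq_comm: "deq (DPlus a b) (DPlus b a)"
| deq_assoc: "deq (DPlus (DPlus a b) c) (DPlus a (DPlus b c))"
| deq_distr_scalar: "deq (DScale (\<alpha> + \<beta>) a) (DPlus (DScale \<alpha> a) (DScale \<beta> a))"
| deq_distr_vector: "deq (DScale \<alpha> (DPlus a b)) (DPlus (DScale \<alpha> a) (DScale \<alpha> b))"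

text \<open>Canonical form: the domain and the coefficient of each pure term.
  A distribution d is congruent to the sum over t in dsupp d of dcoef d t . t
  (coefficients possibly 0).\<close>

fun dsupp :: "dist \<Rightarrow> trm set" where
  "dsupp DZero = {}"
| "dsupp (DTm t) = {t}"
| "dsupp (DPlus a b) = dsupp a \<union> dsupp b"
| "dsupp (DScale c a) = dsupp a"

fun dcoef :: "dist \<Rightarrow> trm \<Rightarrow> complex" where
  "dcoef DZero t = 0"
| "dcoef (DTm s) t = (if s = t then 1 else 0)"
| "dcoef (DPlus a b) t = dcoef a t + dcoef b t"
| "dcoef (DScale c a) t = c * dcoef a t"

fun mapd :: "(trm \<Rightarrow> trm) \<Rightarrow> dist \<Rightarrow> dist" where
  "mapd f DZero = DZero"
| "mapd f (DTm t) = DTm (f t)"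
| "mapd f (DPlus a b) = DPlus (mapd f a) (mapd f b)"
| "mapd f (DScale c a) = DScale c (mapd f a)"

fun mapvd :: "(val \<Rightarrow> val) \<Rightarrow> dist \<Rightarrow> dist" where
  "mapvd f DZero = DZero"
| "mapvd f (DTm (Val v)) = DTm (Val (f v))"
| "mapvd f (DTm t) = DTm t"
| "mapvd f (DPlus a b) = DPlus (mapvd f a) (mapvd f b)"
| "mapvd f (DScale c a) = DScale c (mapvd f a)"

fun dapp :: "dist \<Rightarrow> dist \<Rightarrow> dist" where
  "dapp DZero e = DZero"
| "dapp (DTm t) e = mapd (\<lambda>s. App t s) e"
| "dapp (DPlus a b) e = DPlus (dapp a e) (dapp b e)"
| "dapp (DScale c a) e = DScale c (dapp a e)"

fun liftv :: "nat \<Rightarrow> val \<Rightarrow> val"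
and liftt :: "nat \<Rightarrow> trm \<Rightarrow> trm"
and liftd :: "nat \<Rightarrow> dist \<Rightarrow> dist" where
  "liftv k (Var n) = Var (if n < k then n else Suc n)"
| "liftv k (Lam d) = Lam (liftd (Suc k) d)"
| "liftv k Star = Star"
| "liftv k (Pair v w) = Pair (liftv k v) (liftv k w)"
| "liftv k (Inl v) = Inl (liftv k v)"
| "liftv k (Inr v) = Inr (liftv k v)"
| "liftt k (Val v) = Val (liftv k v)"
| "liftt k (App s t) = App (liftt k s) (liftt k t)"
| "liftt k (Seq t d) = Seq (liftt k t) (liftd k d)"
| "liftt k (Let t d) = Let (liftt k t) (liftd (Suc (Suc k)) d)"
| "liftt k (Match t d1 d2) = Match (liftt k t) (liftd (Suc k) d1) (liftd (Suc k) d2)"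
| "liftd k DZero = DZero"
| "liftd k (DTm t) = DTm (liftt k t)"
| "liftd k (DPlus a b) = DPlus (liftd k a) (liftd k b)"
| "liftd k (DScale c a) = DScale c (liftd k a)"

fun substv :: "nat \<Rightarrow> val \<Rightarrow> val \<Rightarrow> val"
and substt :: "nat \<Rightarrow> val \<Rightarrow> trm \<Rightarrow> trm"
and substd :: "nat \<Rightarrow> val \<Rightarrow> dist \<Rightarrow> dist" where
  "substv k u (Var n) = (if n = k then u else if k < n then Var (n - 1) else Var n)"
| "substv k u (Lam d) = Lam (substd (Suc k) (liftv 0 u) d)"
| "substv k u Star = Star"
| "substv k u (Pair v w) = Pair (substv k u v) (substv k u w)"
| "substv k u (Inl v) = Inl (substv k u v)"
| "substv k u (Inr v) = Inr (substv k u v)"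
| "substt k u (Val v) = Val (substv k u v)"
| "substt k u (App s t) = App (substt k u s) (substt k u t)"
| "substt k u (Seq t d) = Seq (substt k u t) (substd k u d)"
| "substt k u (Let t d) = Let (substt k u t) (substd (Suc (Suc k)) (liftv 0 (liftv 0 u)) d)"
| "substt k u (Match t d1 d2) =
     Match (substt k u t) (substd (Suc k) (liftv 0 u) d1) (substd (Suc k) (liftv 0 u) d2)"
| "substd k u DZero = DZero"
| "substd k u (DTm t) = DTm (substt k u t)"
| "substd k u (DPlus a b) = DPlus (substd k u a) (substd k u b)"
| "substd k u (DScale c a) = DScale c (substd k u a)"

text \<open>Bilinear substitution d<x := e> for a value distribution e (body d of an
  abstraction, x = index 0); linear extension in e.\<close>
fun bsubst :: "dist \<Rightarrow> dist \<Rightarrow> dist" where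
  "bsubst d DZero = DZero"
| "bsubst d (DTm (Val w)) = substd 0 w d"
| "bsubst d (DTm t) = DZero"
| "bsubst d (DPlus a b) = DPlus (bsubst d a) (bsubst d b)"
| "bsubst d (DScale c a) = DScale c (bsubst d a)"

fun closedv :: "nat \<Rightarrow> val \<Rightarrow> bool"
and closedt :: "nat \<Rightarrow> trm \<Rightarrow> bool"
and closedd :: "nat \<Rightarrow> dist \<Rightarrow> bool" where
  "closedv k (Var n) = (n < k)"
| "closedv k (Lam d) = closedd (Suc k) d"
| "closedv k Star = True"
| "closedv k (Pair v w) = (closedv k v \<and> closedv k w)"
| "closedv k (Inl v) = closedv k v"
| "closedv k (Inr v) = closedv k v"
| "closedt k (Val v) = closedv k v"
| "closedt k (App s t) = (closedt k s \<and> closedt k t)"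
| "closedt k (Seq t d) = (closedt k t \<and> closedd k d)"
| "closedt k (Let t d) = (closedt k t \<and> closedd (Suc (Suc k)) d)"
| "closedt k (Match t d1 d2) = (closedt k t \<and> closedd (Suc k) d1 \<and> closedd (Suc k) d2)"
| "closedd k DZero = True"
| "closedd k (DTm t) = closedt k t"
| "closedd k (DPlus a b) = (closedd k a \<and> closedd k b)"
| "closedd k (DScale c a) = closedd k a"

inductive atom :: "trm \<Rightarrow> dist \<Rightarrow> bool" where
  atom_beta: "atom (App (Val (Lam d)) (Val v)) (substd 0 v d)"
| atom_seq: "atom (Seq (Val Star) d) d"
| atom_let: "atom (Let (Val (Pair v w)) d) (substd 0 v (substd 0 (liftv 0 w) d))"
| atom_match_inl: "atom (Match (Val (Inl v)) d1 d2) (substd 0 v d1)"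
| atom_match_inr: "atom (Match (Val (Inr v)) d1 d2) (substd 0 v d2)"
| atom_app_right: "atom t d \<Longrightarrow> atom (App s t) (mapd (\<lambda>u. App s u) d)"
| atom_app_left: "atom t d \<Longrightarrow> atom (App t (Val v)) (mapd (\<lambda>u. App u (Val v)) d)"
| atom_seq_ctx: "atom t d \<Longrightarrow> atom (Seq t e) (mapd (\<lambda>u. Seq u e) d)"
| atom_let_ctx: "atom t d \<Longrightarrow> atom (Let t e) (mapd (\<lambda>u. Let u e) d)"
| atom_match_ctx: "atom t d \<Longrightarrow> atom (Match t e1 e2) (mapd (\<lambda>u. Match u e1 e2) d)"

definition step :: "dist \<Rightarrow> dist \<Rightarrow> bool" where
  "step d d' \<longleftrightarrow> (\<exists>\<alpha> s s' r. deq d (DPlus (DScale \<alpha> (DTm s)) r) \<and> atom s s'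
                     \<and> deq d' (DPlus (DScale \<alpha> s') r))"

abbreviation steps :: "dist \<Rightarrow> dist \<Rightarrow> bool" where
  "steps \<equiv> step\<^sup>*\<^sup>*"

definition dinner :: "dist \<Rightarrow> dist \<Rightarrow> complex" where
  "dinner v w = (\<Sum>t\<in>dsupp v \<union> dsupp w. cnj (dcoef v t) * dcoef w t)"

definition dnorm :: "dist \<Rightarrow> complex" where
  "dnorm v = csqrt (dinner v v)"

fun lincomb :: "(complex \<times> dist) list \<Rightarrow> dist" where
  "lincomb [] = DZero"
| "lincomb ((c, x) # xs) = DPlus (DScale c x) (lincomb xs)"

definition dspan :: "(dist \<Rightarrow> bool) \<Rightarrow> dist \<Rightarrow> bool" where
  "dspan X d \<longleftrightarrow> (\<exists>xs. (\<forall>p\<in>set xs. X (snd p)) \<and> deq d (lincomb xs))"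

datatype ty = TUnit | TSum ty ty | TSharp ty | TArr ty ty

fun sem :: "ty \<Rightarrow> dist \<Rightarrow> bool" where
  "sem TUnit d = deq d (DTm (Val Star))"
| "sem (TSum A B) d =
     ((\<exists>v. sem A v \<and> deq d (mapvd Inl v)) \<or> (\<exists>w. sem B w \<and> deq d (mapvd Inr w)))"
| "sem (TSharp A) d = (dspan (sem A) d \<and> dnorm d = 1)"
| "sem (TArr A B) d =
     (\<exists>body. deq d (DTm (Val (Lam body))) \<and> closedv 0 (Lam body) \<and>
        (\<forall>v. sem A v \<longrightarrow> (\<exists>w. steps (bsubst body v) w \<and> sem B w)))"

definition TBool :: ty where "TBool = TSum TUnit TUnit"

definition tt :: trm where "tt = Val (Inl Star)"
definition ff :: trm where "ff = Val (Inr Star)"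

definition is_bool_basis :: "dist \<Rightarrow> bool" where
  "is_bool_basis x \<longleftrightarrow> x = DTm tt \<or> x = DTm ff"

definition piB :: "dist \<Rightarrow> complex \<times> complex" where
  "piB w = (dcoef w tt, dcoef w ff)"

definition represents :: "dist \<Rightarrow> (complex \<times> complex \<Rightarrow> complex \<times> complex) \<Rightarrow> bool" where
  "represents t F \<longleftrightarrow>
     (\<forall>v. dspan is_bool_basis v \<longrightarrow>
        (\<exists>w. dspan is_bool_basis w \<and> steps (dapp t v) w \<and> piB w = F (piB v)))"

definition c2add :: "complex \<times> complex \<Rightarrow> complex \<times> complex \<Rightarrow> complex \<times> complex" where
  "c2add u v = (fst u + fst v, snd u + snd v)"
definition c2scale :: "complex \<Rightarrow> complex \<times> complex \<Rightarrow> complex \<times> complex" where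
  "c2scale c u = (c * fst u, c * snd u)"
definition c2inner :: "complex \<times> complex \<Rightarrow> complex \<times> complex \<Rightarrow> complex" where
  "c2inner u v = cnj (fst u) * fst v + cnj (snd u) * snd v"
definition c2linear :: "(complex \<times> complex \<Rightarrow> complex \<times> complex) \<Rightarrow> bool" where
  "c2linear F \<longleftrightarrow> (\<forall>u v. F (c2add u v) = c2add (F u) (F v)) \<and> (\<forall>c u. F (c2scale c u) = c2scale c (F u))"
definition unitary2 :: "(complex \<times> complex \<Rightarrow> complex \<times> complex) \<Rightarrow> bool" where
  "unitary2 F \<longleftrightarrow> c2linear F \<and> (\<forall>u v. c2inner (F u) (F v) = c2inner u v)"

end

theory Submission
  imports Defs
begin

text \<open>A distribution that reduces to a value distribution does so by evaluating every term of
  its support along a single evaluation tree, and atomic evaluation is deterministic. Hence all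
  value distributions reachable from one distribution are congruent, and they stay reachable
  after any further reduction. So if \<open>W\<^sub>1, W\<^sub>2\<close> are the results on \<open>tt, ff\<close>, the abstraction
  sends \<open>\<alpha>\<cdot>tt + \<beta>\<cdot>ff\<close> to \<open>\<alpha>\<cdot>W\<^sub>1 + \<beta>\<cdot>W\<^sub>2\<close>, and it maps unit vectors of \<open>\<sharp>\<bool>\<close> to unit vectors
  iff the matrix with columns \<open>W\<^sub>1, W\<^sub>2\<close> preserves the norm of unit vectors. By polarisation this
  makes the columns orthonormal, i.e. the matrix unitary.\<close>

section \<open>Linear algebra on \<open>\<complex>\<^sup>2\<close>\<close>

definition c2matrix :: "complex \<times> complex \<Rightarrow> complex \<times> complex \<Rightarrow> complex \<times> complex \<Rightarrow> complex \<times> complex" where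
  "c2matrix p q u = c2add (c2scale (fst u) p) (c2scale (snd u) q)"

lemma cnj_c2inner: "cnj (c2inner p q) = c2inner q p"
  by (simp add: c2inner_def mult.commute)

lemma c2inner_c2matrix:
  "c2inner (c2matrix p q u) (c2matrix p q v) =
     cnj (fst u) * fst v * c2inner p p + cnj (fst u) * snd v * c2inner p q
     + cnj (snd u) * fst v * c2inner q p + cnj (snd u) * snd v * c2inner q q"
  by (simp add: c2matrix_def c2add_def c2scale_def c2inner_def algebra_simps)

lemma unitary2_c2matrix:
  assumes "c2inner p p = 1" and "c2inner q q = 1" and "c2inner p q = 0"
  shows "unitary2 (c2matrix p q)"
proof -
  have "c2inner q p = 0"
    using assms(3) cnj_c2inner[of p q] by simp
  then have "c2inner (c2matrix p q u) (c2matrix p q v) = c2inner u v" for u v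
    by (simp only: c2inner_c2matrix assms \<open>c2inner q p = 0\<close>) (simp add: c2inner_def)
  moreover have "c2linear (c2matrix p q)"
    by (auto simp: c2linear_def c2matrix_def c2add_def c2scale_def algebra_simps)
  ultimately show ?thesis
    by (simp add: unitary2_def)
qed

lemma c2inner_eq_0_if_c2matrix_isometric:
  assumes p: "c2inner p p = 1" and q: "c2inner q q = 1"
    and isometric: "\<And>u. c2inner u u = 1 \<Longrightarrow> c2inner (c2matrix p q u) (c2matrix p q u) = 1"
  shows "c2inner p q = 0"
proof -
  define z where "z = c2inner p q"
  have qp: "c2inner q p = cnj z"
    by (simp add: z_def cnj_c2inner)
  \<comment> \<open>Test on the unit vectors \<open>(3/5, 4/5)\<close> and \<open>(3/5, 4\<i>/5)\<close>: they give \<open>Re z = 0\<close> and \<open>Im z = 0\<close>.\<close>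
  have "c2inner (3/5, 4/5) (3/5, 4/5) = 1"
    by (simp add: c2inner_def)
  from isometric[OF this] have re: "z + cnj z = 0"
    by (simp add: c2inner_c2matrix p q qp z_def[symmetric] field_simps)
      (metis distrib_right mult_eq_0_iff zero_neq_numeral)
  have "c2inner (3/5, 4 * \<i> / 5) (3/5, 4 * \<i> / 5) = 1"
    by (simp add: c2inner_def)
  from isometric[OF this] have im: "z - cnj z = 0"
    by (simp add: c2inner_c2matrix p q qp z_def[symmetric] field_simps)
  from re im show ?thesis
    unfolding z_def[symmetric] by (simp add: algebra_simps)
qed

section \<open>Canonical forms of distributions\<close>

declare deq_trans [trans]

lemma finite_dsupp [simp]: "finite (dsupp d)"
  by (induction d) auto

lemma dcoef_notin_dsupp: "t \<notin> dsupp d \<Longrightarrow> dcoef d t = 0"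
  by (induction d) auto

lemma deq_dsupp_eq: "deq a b \<Longrightarrow> dsupp a = dsupp b"
  by (induction rule: deq.induct) auto

lemma deq_dcoef_eq: "deq a b \<Longrightarrow> dcoef a = dcoef b"
  by (induction rule: deq.induct) (auto simp: algebra_simps fun_eq_iff)

lemma piB_deq: "deq a b \<Longrightarrow> piB a = piB b"
  by (simp add: piB_def deq_dcoef_eq)

lemma deq_scale_DZero: "deq (DScale c DZero) DZero"
proof -
  have zero: "deq (DScale 0 DZero) DZero"
  proof -
    have "deq (DScale 0 DZero) (DPlus (DScale 0 DZero) DZero)"
      by (rule deq_sym[OF deq_zero])
    also have "deq \<dots> (DPlus DZero (DScale 0 DZero))"
      by (rule deq_comm)
    also have "deq \<dots> (DPlus (DScale 1 DZero) (DScale 0 DZero))"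
      by (intro deq_plus_cong deq_sym[OF deq_one] deq_refl)
    also have "deq \<dots> (DScale 1 DZero)"
      using deq_sym[OF deq_distr_scalar[of 1 0 DZero]] by simp
    also have "deq \<dots> DZero"
      by (rule deq_one)
    finally show ?thesis .
  qed
  have "deq (DScale c DZero) (DScale c (DScale 0 DZero))"
    by (rule deq_scale_cong[OF deq_sym[OF zero]])
  also have "deq \<dots> (DScale 0 DZero)"
    using deq_scale_scale[of c 0 DZero] by simp
  also have "deq \<dots> DZero"
    by (rule zero)
  finally show ?thesis .
qed

lemma deq_DZero_if_dsupp_empty: "dsupp d = {} \<Longrightarrow> deq d DZero"
proof (induction d rule: dsupp.induct)
  case (3 a b)
  then show ?case
    using deq_trans[OF deq_plus_cong[of a DZero b DZero] deq_zero] by simp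
next
  case (4 c a)
  then show ?case
    using deq_trans[OF deq_scale_cong deq_scale_DZero] by simp
qed (auto intro: deq_refl)

lemma deq_plus_interchange: "deq (DPlus (DPlus x y) (DPlus z w)) (DPlus (DPlus x z) (DPlus y w))"
proof -
  have "deq (DPlus (DPlus x y) (DPlus z w)) (DPlus x (DPlus y (DPlus z w)))"
    by (rule deq_assoc)
  also have "deq \<dots> (DPlus x (DPlus (DPlus y z) w))"
    by (intro deq_plus_cong deq_refl deq_sym[OF deq_assoc])
  also have "deq \<dots> (DPlus x (DPlus (DPlus z y) w))"
    by (intro deq_plus_cong deq_comm deq_refl)
  also have "deq \<dots> (DPlus x (DPlus z (DPlus y w)))"
    by (intro deq_plus_cong deq_refl deq_assoc)
  also have "deq \<dots> (DPlus (DPlus x z) (DPlus y w))"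
    by (rule deq_sym[OF deq_assoc])
  finally show ?thesis .
qed

lemma deq_extract_term:
  "t \<in> dsupp d \<Longrightarrow> \<exists>r. deq d (DPlus (DScale (dcoef d t) (DTm t)) r)
     \<and> dsupp r = dsupp d - {t} \<and> (\<forall>x. x \<noteq> t \<longrightarrow> dcoef r x = dcoef d x)"
proof (induction d rule: dsupp.induct)
  case (2 s)
  then show ?case
    by (intro exI[of _ DZero]) (auto intro!: deq_sym[OF deq_trans[OF deq_zero deq_one]])
next
  case (4 c a)
  then obtain r where r: "deq a (DPlus (DScale (dcoef a t) (DTm t)) r)" "dsupp r = dsupp a - {t}"
    "\<forall>x. x \<noteq> t \<longrightarrow> dcoef r x = dcoef a x" by auto
  have "deq (DScale c a) (DPlus (DScale (c * dcoef a t) (DTm t)) (DScale c r))"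
    using deq_trans[OF deq_trans[OF deq_scale_cong[OF r(1)] deq_distr_vector]
        deq_plus_cong[OF deq_scale_scale deq_refl]] .
  then show ?case
    using r by (intro exI[of _ "DScale c r"]) auto
next
  case (3 a b)
  have IH_a: "\<exists>r. deq a (DPlus (DScale (dcoef a t) (DTm t)) r) \<and> dsupp r = dsupp a - {t}
      \<and> (\<forall>x. x \<noteq> t \<longrightarrow> dcoef r x = dcoef a x)" if "t \<in> dsupp a"
    using "3.IH"(1) that .
  have IH_b: "\<exists>r. deq b (DPlus (DScale (dcoef b t) (DTm t)) r) \<and> dsupp r = dsupp b - {t}
      \<and> (\<forall>x. x \<noteq> t \<longrightarrow> dcoef r x = dcoef b x)" if "t \<in> dsupp b"
    using "3.IH"(2) that .
  consider "t \<in> dsupp a" "t \<in> dsupp b" | "t \<in> dsupp a" "t \<notin> dsupp b" | "t \<notin> dsupp a" "t \<in> dsupp b"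
    using "3.prems" by auto
  then show ?case
  proof cases
    case 1
    obtain r where r: "deq a (DPlus (DScale (dcoef a t) (DTm t)) r)" "dsupp r = dsupp a - {t}"
        "\<forall>x. x \<noteq> t \<longrightarrow> dcoef r x = dcoef a x"
      using IH_a[OF 1(1)] by (elim exE conjE)
    obtain r' where r': "deq b (DPlus (DScale (dcoef b t) (DTm t)) r')" "dsupp r' = dsupp b - {t}"
        "\<forall>x. x \<noteq> t \<longrightarrow> dcoef r' x = dcoef b x"
      using IH_b[OF 1(2)] by (elim exE conjE)
    have "deq (DPlus a b) (DPlus (DPlus (DScale (dcoef a t) (DTm t)) (DScale (dcoef b t) (DTm t))) (DPlus r r'))"
      using deq_trans[OF deq_plus_cong[OF r(1) r'(1)] deq_plus_interchange] .
    also have "deq \<dots> (DPlus (DScale (dcoef a t + dcoef b t) (DTm t)) (DPlus r r'))"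
      by (intro deq_plus_cong deq_sym[OF deq_distr_scalar] deq_refl)
    finally have "deq (DPlus a b) (DPlus (DScale (dcoef (DPlus a b) t) (DTm t)) (DPlus r r'))"
      by simp
    moreover have "dsupp (DPlus r r') = dsupp (DPlus a b) - {t}"
      using r(2) r'(2) by auto
    moreover have "\<forall>x. x \<noteq> t \<longrightarrow> dcoef (DPlus r r') x = dcoef (DPlus a b) x"
      using r(3) r'(3) by simp
    ultimately show ?thesis
      by blast
  next
    case 2
    obtain r where r: "deq a (DPlus (DScale (dcoef a t) (DTm t)) r)" "dsupp r = dsupp a - {t}"
        "\<forall>x. x \<noteq> t \<longrightarrow> dcoef r x = dcoef a x"
      using IH_a[OF 2(1)] by (elim exE conjE)
    have "deq (DPlus a b) (DPlus (DScale (dcoef a t) (DTm t)) (DPlus r b))"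
      using deq_trans[OF deq_plus_cong[OF r(1) deq_refl] deq_assoc] .
    moreover have "dcoef (DPlus a b) t = dcoef a t"
      using dcoef_notin_dsupp[OF 2(2)] by simp
    moreover have "dsupp (DPlus r b) = dsupp (DPlus a b) - {t}"
      using r(2) 2 by auto
    moreover have "\<forall>x. x \<noteq> t \<longrightarrow> dcoef (DPlus r b) x = dcoef (DPlus a b) x"
      using r(3) by simp
    ultimately show ?thesis
      by metis
  next
    case 3
    obtain r where r: "deq b (DPlus (DScale (dcoef b t) (DTm t)) r)" "dsupp r = dsupp b - {t}"
        "\<forall>x. x \<noteq> t \<longrightarrow> dcoef r x = dcoef b x"
      using IH_b[OF 3(2)] by (elim exE conjE)
    have "deq (DPlus a b) (DPlus (DScale (dcoef b t) (DTm t)) (DPlus r a))"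
      using deq_trans[OF deq_comm deq_trans[OF deq_plus_cong[OF r(1) deq_refl] deq_assoc]] .
    moreover have "dcoef (DPlus a b) t = dcoef b t"
      using dcoef_notin_dsupp[OF 3(1)] by simp
    moreover have "dsupp (DPlus r a) = dsupp (DPlus a b) - {t}"
      using r(2) 3 by auto
    moreover have "\<forall>x. x \<noteq> t \<longrightarrow> dcoef (DPlus r a) x = dcoef (DPlus a b) x"
      using r(3) by (simp add: add.commute)
    ultimately show ?thesis
      by metis
  qed
qed simp

lemma deq_lincomb_dcoef:
  assumes "distinct ts" and "set ts = dsupp d"
  shows "deq d (lincomb (map (\<lambda>t. (dcoef d t, DTm t)) ts))"
  using assms
proof (induction ts arbitrary: d)
  case Nil
  then show ?case
    by (simp add: deq_DZero_if_dsupp_empty)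
next
  case (Cons t ts)
  then obtain r where r: "deq d (DPlus (DScale (dcoef d t) (DTm t)) r)"
      "dsupp r = dsupp d - {t}" "\<forall>x. x \<noteq> t \<longrightarrow> dcoef r x = dcoef d x"
    using deq_extract_term[of t d] by auto
  have map_eq: "map (\<lambda>u. (dcoef r u, DTm u)) ts = map (\<lambda>u. (dcoef d u, DTm u)) ts"
    using Cons.prems r(3) by auto
  have "deq r (lincomb (map (\<lambda>u. (dcoef r u, DTm u)) ts))"
    using Cons.IH Cons.prems r(2) by auto
  then have "deq r (lincomb (map (\<lambda>u. (dcoef d u, DTm u)) ts))"
    unfolding map_eq .
  then show ?case
    using deq_trans[OF r(1) deq_plus_cong[OF deq_refl]] by simp
qed

lemma dsupp_lincomb: "dsupp (lincomb xs) = (\<Union>p\<in>set xs. dsupp (snd p))"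
  by (induction xs rule: lincomb.induct) auto

lemma dspan_iff_dsupp_subset:
  assumes "\<And>x. X x \<Longrightarrow> dsupp x \<subseteq> T" and "\<And>t. t \<in> T \<Longrightarrow> X (DTm t)"
  shows "dspan X d \<longleftrightarrow> dsupp d \<subseteq> T"
proof
  assume "dspan X d"
  then obtain xs where "\<forall>p\<in>set xs. X (snd p)" and "deq d (lincomb xs)"
    unfolding dspan_def by blast
  then show "dsupp d \<subseteq> T"
    using assms(1) deq_dsupp_eq[of d "lincomb xs"] by (auto simp: dsupp_lincomb)
next
  assume "dsupp d \<subseteq> T"
  obtain ts where "distinct ts" and ts: "set ts = dsupp d"
    using finite_distinct_list[OF finite_dsupp] by blast
  then have "deq d (lincomb (map (\<lambda>t. (dcoef d t, DTm t)) ts))"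
    by (rule deq_lincomb_dcoef)
  moreover have "\<forall>p\<in>set (map (\<lambda>t. (dcoef d t, DTm t)) ts). X (snd p)"
    using assms(2) ts \<open>dsupp d \<subseteq> T\<close> by auto
  ultimately show "dspan X d"
    unfolding dspan_def by blast
qed

lemma tt_neq_ff [simp]: "tt \<noteq> ff" "ff \<noteq> tt"
  by (auto simp: tt_def ff_def)

lemma dsupp_mapvd: "dsupp (mapvd f d) = (\<lambda>t. case t of Val v \<Rightarrow> Val (f v) | _ \<Rightarrow> t) ` dsupp d"
  by (induction f d rule: mapvd.induct) auto

lemma dsupp_subset_if_sem_TBool: "sem TBool x \<Longrightarrow> dsupp x \<subseteq> {tt, ff}"
  by (auto simp: TBool_def tt_def ff_def dsupp_mapvd dest!: deq_dsupp_eq)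

lemma sem_TBool_tt: "sem TBool (DTm tt)" and sem_TBool_ff: "sem TBool (DTm ff)"
  by (auto simp: TBool_def tt_def ff_def intro!: exI[of _ "DTm (Val Star)"] deq_refl)

lemma dspan_bool_basis_iff: "dspan is_bool_basis d \<longleftrightarrow> dsupp d \<subseteq> {tt, ff}"
  by (rule dspan_iff_dsupp_subset) (auto simp: is_bool_basis_def)

lemma dspan_sem_TBool_iff: "dspan (sem TBool) d \<longleftrightarrow> dsupp d \<subseteq> {tt, ff}"
  by (rule dspan_iff_dsupp_subset) (auto simp: dsupp_subset_if_sem_TBool sem_TBool_tt sem_TBool_ff)

lemma dinner_eq_c2inner:
  assumes "dsupp a \<subseteq> {tt, ff}" and "dsupp b \<subseteq> {tt, ff}"
  shows "dinner a b = c2inner (piB a) (piB b)"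
proof -
  have "dinner a b = (\<Sum>t\<in>{tt, ff}. cnj (dcoef a t) * dcoef b t)"
    unfolding dinner_def by (rule sum.mono_neutral_left) (use assms dcoef_notin_dsupp in auto)
  then show ?thesis
    by (simp add: c2inner_def piB_def)
qed

lemma dnorm_eq_1_iff: "dnorm d = 1 \<longleftrightarrow> dinner d d = 1"
  unfolding dnorm_def by (metis csqrt_1 power2_csqrt)

lemma sem_TSharp_TBool_iff:
  "sem (TSharp TBool) v \<longleftrightarrow> dsupp v \<subseteq> {tt, ff} \<and> c2inner (piB v) (piB v) = 1"
  by (auto simp: dspan_sem_TBool_iff dnorm_eq_1_iff dinner_eq_c2inner)

fun dbind :: "(trm \<Rightarrow> dist) \<Rightarrow> dist \<Rightarrow> dist" where
  "dbind f DZero = DZero"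
| "dbind f (DTm t) = f t"
| "dbind f (DPlus a b) = DPlus (dbind f a) (dbind f b)"
| "dbind f (DScale c a) = DScale c (dbind f a)"

lemma dsupp_dbind: "dsupp (dbind f d) = (\<Union>t\<in>dsupp d. dsupp (f t))"
  by (induction d) auto

lemma dbind_DTm: "dbind DTm d = d"
  by (induction d rule: dsupp.induct) auto

lemma dbind_cong: "(\<And>t. t \<in> dsupp d \<Longrightarrow> f t = g t) \<Longrightarrow> dbind f d = dbind g d"
  by (induction d rule: dsupp.induct) auto

lemma deq_dbind: "deq a b \<Longrightarrow> deq (dbind f a) (dbind f b)"
  by (induction rule: deq.induct) (auto intro: deq.intros)

lemma deq_dbind_pointwise:
  "(\<And>t. t \<in> dsupp d \<Longrightarrow> deq (f t) (g t)) \<Longrightarrow> deq (dbind f d) (dbind g d)"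
  by (induction d rule: dsupp.induct) (auto intro: deq_plus_cong deq_scale_cong deq_refl)

lemma dapp_DTm_eq_dbind: "dapp (DTm s) v = dbind (\<lambda>t. DTm (App s t)) v"
  by (induction v rule: dsupp.induct) auto

lemma bsubst_eq_dbind: "bsubst body v = dbind (\<lambda>t. bsubst body (DTm t)) v"
  by (induction body v rule: bsubst.induct) auto

lemma piB_dbind:
  assumes "dsupp d \<subseteq> {tt, ff}"
  shows "piB (dbind f d) = c2matrix (piB (f tt)) (piB (f ff)) (piB d)"
  using assms
  by (induction d rule: dsupp.induct)
    (auto simp: piB_def c2matrix_def c2add_def c2scale_def algebra_simps)

lemma step_plus_left: "step a a' \<Longrightarrow> step (DPlus a r) (DPlus a' r)"
  unfolding step_def
proof (elim exE conjE)
  fix \<alpha> s s' r0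
  assume a: "deq a (DPlus (DScale \<alpha> (DTm s)) r0)" and "atom s s'"
    and a': "deq a' (DPlus (DScale \<alpha> s') r0)"
  have "deq (DPlus a r) (DPlus (DScale \<alpha> (DTm s)) (DPlus r0 r))"
    using deq_trans[OF deq_plus_cong[OF a deq_refl] deq_assoc] .
  moreover have "deq (DPlus a' r) (DPlus (DScale \<alpha> s') (DPlus r0 r))"
    using deq_trans[OF deq_plus_cong[OF a' deq_refl] deq_assoc] .
  ultimately show "\<exists>\<alpha> s s' r'. deq (DPlus a r) (DPlus (DScale \<alpha> (DTm s)) r') \<and> atom s s'
      \<and> deq (DPlus a' r) (DPlus (DScale \<alpha> s') r')"
    using \<open>atom s s'\<close> by blast
qed

lemma step_plus_right: "step a a' \<Longrightarrow> step (DPlus r a) (DPlus r a')"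
  using step_plus_left[of a a' r] unfolding step_def by (blast intro: deq_trans deq_comm)

lemma step_scale: "step a a' \<Longrightarrow> step (DScale c a) (DScale c a')"
  unfolding step_def
proof (elim exE conjE)
  fix \<alpha> s s' r
  assume a: "deq a (DPlus (DScale \<alpha> (DTm s)) r)" and "atom s s'"
    and a': "deq a' (DPlus (DScale \<alpha> s') r)"
  have "deq (DScale c a) (DPlus (DScale (c * \<alpha>) (DTm s)) (DScale c r))"
    using deq_trans[OF deq_trans[OF deq_scale_cong[OF a] deq_distr_vector]
        deq_plus_cong[OF deq_scale_scale deq_refl]] .
  moreover have "deq (DScale c a') (DPlus (DScale (c * \<alpha>) s') (DScale c r))"
    using deq_trans[OF deq_trans[OF deq_scale_cong[OF a'] deq_distr_vector]
        deq_plus_cong[OF deq_scale_scale deq_refl]] .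
  ultimately show "\<exists>\<alpha>' s s' r'. deq (DScale c a) (DPlus (DScale \<alpha>' (DTm s)) r') \<and> atom s s'
      \<and> deq (DScale c a') (DPlus (DScale \<alpha>' s') r')"
    using \<open>atom s s'\<close> by blast
qed

lemma steps_plus: "steps a a' \<Longrightarrow> steps b b' \<Longrightarrow> steps (DPlus a b) (DPlus a' b')"
proof -
  assume "steps a a'" and "steps b b'"
  have "steps (DPlus a b) (DPlus a' b)"
    using \<open>steps a a'\<close> by induction (auto intro: rtranclp.rtrancl_into_rtrancl step_plus_left)
  also have "steps (DPlus a' b) (DPlus a' b')"
    using \<open>steps b b'\<close> by induction (auto intro: rtranclp.rtrancl_into_rtrancl step_plus_right)
  finally show ?thesis .
qed

lemma steps_scale: "steps a a' \<Longrightarrow> steps (DScale c a) (DScale c a')"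
  by (induction rule: rtranclp_induct) (auto intro: rtranclp.rtrancl_into_rtrancl step_scale)

lemma steps_dbind: "(\<And>t. t \<in> dsupp d \<Longrightarrow> steps (f t) (g t)) \<Longrightarrow> steps (dbind f d) (dbind g d)"
  by (induction d rule: dsupp.induct) (auto intro: steps_plus steps_scale)

lemma step_DTm_if_atom: "atom s d \<Longrightarrow> step (DTm s) d"
  unfolding step_def
  by (intro exI[of _ 1] exI[of _ s] exI[of _ d] exI[of _ DZero])
    (auto intro: deq_sym[OF deq_trans[OF deq_zero deq_one]])

definition value_dist :: "dist \<Rightarrow> bool" where
  "value_dist w \<longleftrightarrow> (\<forall>t\<in>dsupp w. \<exists>v. t = Val v)"

lemma value_dist_if_dsupp_bool: "dsupp w \<subseteq> {tt, ff} \<Longrightarrow> value_dist w"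
  by (auto simp: value_dist_def tt_def ff_def)

lemma steps_dapp_Lam:
  assumes "value_dist v"
  shows "steps (dapp (DTm (Val (Lam body))) v) (bsubst body v)"
  unfolding dapp_DTm_eq_dbind bsubst_eq_dbind[of body v]
proof (rule steps_dbind)
  fix t assume "t \<in> dsupp v"
  then obtain b where "t = Val b"
    using assms by (auto simp: value_dist_def)
  then show "steps (DTm (App (Val (Lam body)) t)) (bsubst body (DTm t))"
    by (simp add: step_DTm_if_atom atom_beta r_into_rtranclp)
qed

section \<open>Determinacy of results\<close>

lemma atom_not_Val: "\<not> atom (Val v) d"
  by (auto elim: atom.cases)

lemma atom_deterministic: "atom s d \<Longrightarrow> atom s d' \<Longrightarrow> d = d'"
proof (induction arbitrary: d' rule: atom.induct)
qed (erule atom.cases; auto simp: atom_not_Val)+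

text \<open>Unlike \<open>steps\<close>, which may split and recombine terms up
  to \<open>\<equiv>\<close>, this follows a single evaluation tree, so its result is unique up to \<open>\<equiv>\<close>.\<close>

inductive big_step :: "trm \<Rightarrow> dist \<Rightarrow> bool" where
  big_step_Val: "big_step (Val v) (DTm (Val v))"
| big_step_atom: "atom s d \<Longrightarrow> \<forall>u\<in>dsupp d. big_step u (f u) \<Longrightarrow> big_step s (dbind f d)"

lemma big_step_atomE:
  assumes "big_step s w" and "atom s d"
  obtains f where "\<forall>u\<in>dsupp d. big_step u (f u)" and "w = dbind f d"
  using assms(1) by cases (use assms(2) atom_deterministic atom_not_Val in blast)+

lemma big_step_unique: "big_step s w \<Longrightarrow> big_step s w' \<Longrightarrow> deq w w'"
proof (induction arbitrary: w' rule: big_step.induct)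
  case (big_step_Val v)
  then show ?case
    by cases (auto simp: atom_not_Val intro: deq_refl)
next
  case (big_step_atom s d f)
  from big_step_atom.prems big_step_atom.hyps(1) obtain f' where
    "\<forall>u\<in>dsupp d. big_step u (f' u)" and "w' = dbind f' d"
    by (rule big_step_atomE)
  with big_step_atom.IH show ?case
    by (auto intro: deq_dbind_pointwise)
qed

lemma deq_dbind_big_step:
  "\<forall>t\<in>dsupp d. big_step t (f t) \<Longrightarrow> \<forall>t\<in>dsupp d. big_step t (g t) \<Longrightarrow> deq (dbind f d) (dbind g d)"
  by (blast intro: deq_dbind_pointwise big_step_unique)

lemma steps_dbind_big_step: "\<forall>t\<in>dsupp d. big_step t (f t) \<Longrightarrow> steps d (dbind f d)"
proof -
  have "big_step s w \<Longrightarrow> steps (DTm s) w" for s w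
  proof (induction rule: big_step.induct)
    case (big_step_atom s d f)
    then have "steps (dbind DTm d) (dbind f d)"
      by (intro steps_dbind) auto
    then show ?case
      using step_DTm_if_atom[OF big_step_atom.hyps(1)] by (simp add: dbind_DTm)
  qed simp
  moreover assume "\<forall>t\<in>dsupp d. big_step t (f t)"
  ultimately have "steps (dbind DTm d) (dbind f d)"
    by (intro steps_dbind) auto
  then show ?thesis
    by (simp add: dbind_DTm)
qed

lemma big_step_if_steps_to_value_dist:
  assumes "steps d w" and "value_dist w"
  shows "\<exists>f. (\<forall>t\<in>dsupp d. big_step t (f t)) \<and> deq (dbind f d) w"
  using assms(1)
proof (induction rule: converse_rtranclp_induct)
  case base
  have "\<forall>t\<in>dsupp w. big_step t (DTm t)"
    using assms(2) by (auto simp: value_dist_def intro: big_step_Val)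
  then show ?case
    by (metis dbind_DTm deq_refl)
next
  case (step d d')
  then obtain f where f: "\<forall>t\<in>dsupp d'. big_step t (f t)" and "deq (dbind f d') w"
    by blast
  obtain \<alpha> s s' r where d: "deq d (DPlus (DScale \<alpha> (DTm s)) r)" and "atom s s'"
    and d': "deq d' (DPlus (DScale \<alpha> s') r)"
    using step.hyps(1) unfolding step_def by blast
  have supp: "dsupp d = insert s (dsupp r)" "dsupp d' = dsupp s' \<union> dsupp r"
    using deq_dsupp_eq[OF d] deq_dsupp_eq[OF d'] by auto
  define f0 where "f0 = f(s := dbind f s')"
  have "big_step s (dbind f s')"
    using big_step_atom[OF \<open>atom s s'\<close>] f supp by auto
  then have f0: "\<forall>t\<in>dsupp d. big_step t (f0 t)"
    using f supp by (auto simp: f0_def)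
  have "deq (dbind f0 d) (DPlus (DScale \<alpha> (dbind f s')) (dbind f0 r))"
    using deq_dbind[OF d, of f0] by (simp add: f0_def)
  also have "deq \<dots> (DPlus (DScale \<alpha> (dbind f s')) (dbind f r))"
    using deq_dbind_big_step[of r f0 f] f0 f supp by (intro deq_plus_cong deq_refl) auto
  also have "deq \<dots> (dbind f d')"
    using deq_sym[OF deq_dbind[OF d', of f]] by simp
  also have "deq \<dots> w"
    by fact
  finally show ?case
    using f0 by blast
qed

lemma step_preserves_big_step:
  assumes "step d d'" and f: "\<forall>t\<in>dsupp d. big_step t (f t)"
  shows "\<exists>f'. (\<forall>t\<in>dsupp d'. big_step t (f' t)) \<and> deq (dbind f' d') (dbind f d)"
proof -
  obtain \<alpha> s s' r where d: "deq d (DPlus (DScale \<alpha> (DTm s)) r)" and "atom s s'"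
    and d': "deq d' (DPlus (DScale \<alpha> s') r)"
    using assms(1) unfolding step_def by blast
  have supp: "dsupp d = insert s (dsupp r)" "dsupp d' = dsupp s' \<union> dsupp r"
    using deq_dsupp_eq[OF d] deq_dsupp_eq[OF d'] by auto
  obtain g where g: "\<forall>u\<in>dsupp s'. big_step u (g u)" and fs: "f s = dbind g s'"
    using f supp big_step_atomE[OF _ \<open>atom s s'\<close>] by (metis insertI1)
  define f' where "f' u = (if u \<in> dsupp s' then g u else f u)" for u
  have f': "\<forall>t\<in>dsupp d'. big_step t (f' t)"
    using f g supp by (auto simp: f'_def)
  have "dbind f' s' = f s"
    unfolding fs f'_def by (rule dbind_cong) simp
  then have "deq (dbind f' d') (DPlus (DScale \<alpha> (f s)) (dbind f' r))"
    using deq_dbind[OF d', of f'] by simp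
  also have "deq \<dots> (DPlus (DScale \<alpha> (f s)) (dbind f r))"
    using deq_dbind_big_step[of r f' f] f' f supp by (intro deq_plus_cong deq_refl) auto
  also have "deq \<dots> (dbind f d)"
    using deq_sym[OF deq_dbind[OF d, of f]] by simp
  finally show ?thesis
    using f' by blast
qed

lemma steps_preserve_big_step:
  assumes "steps d d'" and "\<forall>t\<in>dsupp d. big_step t (f t)"
  shows "\<exists>f'. (\<forall>t\<in>dsupp d'. big_step t (f' t)) \<and> deq (dbind f' d') (dbind f d)"
  using assms(1)
proof (induction rule: rtranclp_induct)
  case base
  then show ?case
    using assms(2) deq_refl by blast
next
  case (step d' d'')
  then obtain f' where f': "\<forall>t\<in>dsupp d'. big_step t (f' t)" and f'f: "deq (dbind f' d') (dbind f d)"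
    by blast
  obtain f'' where "\<forall>t\<in>dsupp d''. big_step t (f'' t)" and "deq (dbind f'' d'') (dbind f' d')"
    using step_preserves_big_step[OF step.hyps(2) f'] by blast
  with f'f show ?case
    using deq_trans by blast
qed

lemma steps_value_dist_unique:
  assumes "steps d w" "value_dist w" and "steps d w'" "value_dist w'"
  shows "deq w w'"
proof -
  obtain f where f: "\<forall>t\<in>dsupp d. big_step t (f t)" and "deq (dbind f d) w"
    using big_step_if_steps_to_value_dist[OF assms(1,2)] by blast
  obtain g where g: "\<forall>t\<in>dsupp d. big_step t (g t)" and "deq (dbind g d) w'"
    using big_step_if_steps_to_value_dist[OF assms(3,4)] by blast
  have "deq w (dbind f d)"
    by (rule deq_sym) fact
  also have "deq \<dots> (dbind g d)"
    using f g by (rule deq_dbind_big_step)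
  also have "deq \<dots> w'"
    by fact
  finally show ?thesis .
qed

lemma steps_value_dist_confluent:
  assumes "steps d d'" and "steps d w" and "value_dist w"
  obtains w' where "steps d' w'" and "deq w' w"
proof -
  obtain f where f: "\<forall>t\<in>dsupp d. big_step t (f t)" and fw: "deq (dbind f d) w"
    using big_step_if_steps_to_value_dist[OF assms(2,3)] by blast
  obtain f' where f': "\<forall>t\<in>dsupp d'. big_step t (f' t)" and f'f: "deq (dbind f' d') (dbind f d)"
    using steps_preserve_big_step[OF assms(1) f] by blast
  from f'f fw have "deq (dbind f' d') w"
    by (rule deq_trans)
  with steps_dbind_big_step[OF f'] show ?thesis
    by (rule that)
qed

lemma sem_TArr_Lam_iff:
  assumes "closedv 0 (Lam body)"
  shows "sem (TArr A B) (DTm (Val (Lam body)))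
    \<longleftrightarrow> (\<forall>v. sem A v \<longrightarrow> (\<exists>w. steps (bsubst body v) w \<and> sem B w))"
proof -
  have "deq (DTm (Val (Lam body))) (DTm (Val (Lam body'))) \<longleftrightarrow> body' = body" for body'
    using deq_dsupp_eq[of "DTm (Val (Lam body))" "DTm (Val (Lam body'))"] deq_refl by auto
  then show ?thesis
    using assms by auto
qed

lemma unitary_represented_if_sem_arrow:
  assumes sem_arrow: "\<forall>v. sem (TSharp TBool) v \<longrightarrow> (\<exists>w. steps (bsubst body v) w \<and> sem (TSharp TBool) w)"
  shows "\<exists>F. unitary2 F \<and> represents (DTm (Val (Lam body))) F"
proof -
  have "sem (TSharp TBool) (DTm tt)" and "sem (TSharp TBool) (DTm ff)"
    unfolding sem_TSharp_TBool_iff by (simp_all add: piB_def c2inner_def)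
  then obtain w1 w2 where w1: "steps (bsubst body (DTm tt)) w1" "sem (TSharp TBool) w1"
    and w2: "steps (bsubst body (DTm ff)) w2" "sem (TSharp TBool) w2"
    using sem_arrow by meson
  have w1_dsupp: "dsupp w1 \<subseteq> {tt, ff}" and w1_norm: "c2inner (piB w1) (piB w1) = 1"
    and w2_dsupp: "dsupp w2 \<subseteq> {tt, ff}" and w2_norm: "c2inner (piB w2) (piB w2) = 1"
    using w1(2) w2(2) unfolding sem_TSharp_TBool_iff by blast+
  define run where "run v = dbind (\<lambda>t. if t = tt then w1 else w2) v" for v
  define F where "F = c2matrix (piB w1) (piB w2)"
  have run_steps: "steps (bsubst body v) (run v)" if "dsupp v \<subseteq> {tt, ff}" for v
    unfolding run_def bsubst_eq_dbind[of body v] using that w1(1) w2(1) by (intro steps_dbind) auto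
  have run_dsupp: "dsupp (run v) \<subseteq> {tt, ff}" for v
    using w1_dsupp w2_dsupp by (auto simp: run_def dsupp_dbind split: if_splits)
  have piB_run: "piB (run v) = F (piB v)" if "dsupp v \<subseteq> {tt, ff}" for v
    using that by (simp add: run_def F_def piB_dbind)
  have isometric: "c2inner (F u) (F u) = 1" if "c2inner u u = 1" for u
  proof -
    define V where "V = DPlus (DScale (fst u) (DTm tt)) (DScale (snd u) (DTm ff))"
    have V: "dsupp V = {tt, ff}" "piB V = u"
      by (auto simp: V_def piB_def)
    with that have "sem (TSharp TBool) V"
      unfolding sem_TSharp_TBool_iff by simp
    then obtain w where "steps (bsubst body V) w" and "sem (TSharp TBool) w"
      using sem_arrow by blast
    then have "steps (bsubst body V) w" "dsupp w \<subseteq> {tt, ff}" "c2inner (piB w) (piB w) = 1"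
      unfolding sem_TSharp_TBool_iff by blast+
    moreover have "steps (bsubst body V) (run V)"
      using run_steps V by simp
    ultimately have "deq w (run V)"
      using run_dsupp by (blast intro: steps_value_dist_unique value_dist_if_dsupp_bool)
    then show ?thesis
      using piB_deq piB_run V \<open>c2inner (piB w) (piB w) = 1\<close> by force
  qed
  have "unitary2 F"
    unfolding F_def using w1_norm w2_norm isometric[unfolded F_def]
    by (intro unitary2_c2matrix c2inner_eq_0_if_c2matrix_isometric)
  moreover have "represents (DTm (Val (Lam body))) F"
    unfolding represents_def dspan_bool_basis_iff
  proof (intro allI impI)
    fix v assume v: "dsupp v \<subseteq> {tt, ff}"
    have "steps (dapp (DTm (Val (Lam body))) v) (run v)"
      using steps_dapp_Lam[OF value_dist_if_dsupp_bool[OF v]] run_steps[OF v] by (rule rtranclp_trans)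
    then show "\<exists>w. dsupp w \<subseteq> {tt, ff} \<and> steps (dapp (DTm (Val (Lam body))) v) w \<and> piB w = F (piB v)"
      using run_dsupp piB_run[OF v] by blast
  qed
  ultimately show ?thesis
    by blast
qed

lemma sem_arrow_if_unitary_represented:
  assumes "unitary2 F" and rep: "represents (DTm (Val (Lam body))) F"
    and v: "sem (TSharp TBool) v"
  shows "\<exists>w. steps (bsubst body v) w \<and> sem (TSharp TBool) w"
proof -
  have v_dsupp: "dsupp v \<subseteq> {tt, ff}" and v_norm: "c2inner (piB v) (piB v) = 1"
    using v unfolding sem_TSharp_TBool_iff by blast+
  then obtain w where w: "dsupp w \<subseteq> {tt, ff}" "steps (dapp (DTm (Val (Lam body))) v) w"
    and piB_w: "piB w = F (piB v)"
    using rep unfolding represents_def dspan_bool_basis_iff by blast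
  obtain w' where "steps (bsubst body v) w'" and w': "deq w' w"
    using steps_value_dist_confluent[OF steps_dapp_Lam w(2)] value_dist_if_dsupp_bool v_dsupp w(1)
    by blast
  moreover have "c2inner (F (piB v)) (F (piB v)) = 1"
    using \<open>unitary2 F\<close> v_norm by (metis unitary2_def)
  then have "sem (TSharp TBool) w'"
    unfolding sem_TSharp_TBool_iff deq_dsupp_eq[OF w'] piB_deq[OF w'] piB_w using w(1) by blast
  ultimately show ?thesis
    by blast
qed

theorem mainTheorem1:
  fixes body :: dist
  assumes "closedv 0 (Lam body)"
  shows "sem (TArr (TSharp TBool) (TSharp TBool)) (DTm (Val (Lam body)))
    \<longleftrightarrow> (\<exists>F. unitary2 F \<and> represents (DTm (Val (Lam body))) F)"
  unfolding sem_TArr_Lam_iff[OF assms]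
  using unitary_represented_if_sem_arrow sem_arrow_if_unitary_represented by blast

end
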